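(* Let $\mathcal{C}=\{\theta\in\mathbb{R}^n:\|\theta\|_2\le1\}$, let $\theta^*\notin\mathcal{C}$, $\sigma>0$, $Y\sim N(\theta^*,\sigma^2I_n)$, and $\hat\theta(Y)=\Pi_{\mathcal{C}}(Y)$. Then $$\lim_{\sigma\downarrow0}\frac{1}{\sigma^2}M(\hat\theta,\theta^* )=\frac{n-1}{\|\theta^*\|^2},\qquad \lim_{\sigma\downarrow0}\frac{1}{\sigma^2}E(\hat\theta,\theta^* )=\frac{n-1}{\|\theta^*\|}.$$
   Context: $\Pi_{\mathcal{C}}$ is Euclidean projection. Misspecified risk: $M(\hat\theta,\theta^* )=\mathbb{E}\|\hat\theta(Y)-\Pi_{\mathcal{C}}(\theta^* )\|^2$; excess risk: $E(\hat\theta,\theta^* )=\mathbb{E}\|\hat\theta(Y)-\theta^*\|^2-\|\Pi_{\mathcal{C}}(\theta^* )-\theta^*\|^2$. *)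

theory Defs
  imports "HOL-Probability.Probability"
begin

definition gaussian_density :: "'a::euclidean_space \<Rightarrow> real \<Rightarrow> 'a \<Rightarrow> real" where
  "gaussian_density mu \<sigma> y =
     (2 * pi * \<sigma>\<^sup>2) powr (- real DIM('a) / 2) * exp (- (norm (y - mu))\<^sup>2 / (2 * \<sigma>\<^sup>2))"

definition gaussian :: "'a::euclidean_space \<Rightarrow> real \<Rightarrow> 'a measure" where
  "gaussian mu \<sigma> = density lborel (\<lambda>y. ennreal (gaussian_density mu \<sigma> y))"

definition unit_ball_C :: "'a::euclidean_space set" where
  "unit_ball_C = cball 0 1"

definition proj_C :: "'a::euclidean_space \<Rightarrow> 'a" where
  "proj_C = closest_point unit_ball_C"

definition misspec_risk :: "('a::euclidean_space \<Rightarrow> 'a) \<Rightarrow> 'a \<Rightarrow> real \<Rightarrow> real" where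
  "misspec_risk est \<theta> \<sigma> = (\<integral>y. (norm (est y - proj_C \<theta>))\<^sup>2 \<partial>gaussian \<theta> \<sigma>)"

definition excess_risk :: "('a::euclidean_space \<Rightarrow> 'a) \<Rightarrow> 'a \<Rightarrow> real \<Rightarrow> real" where
  "excess_risk est \<theta> \<sigma> = (\<integral>y. (norm (est y - \<theta>))\<^sup>2 \<partial>gaussian \<theta> \<sigma>) - (norm (proj_C \<theta> - \<theta>))\<^sup>2"

end

theory Submission
  imports Defs
begin

text \<open>
  For \<open>|\<theta>| > 1\<close> the projection agrees near \<open>\<theta>\<close> with \<open>y \<mapsto> y / |y|\<close>, whose derivative at
  \<open>\<theta>\<close> is \<open>(I - u u\<^sup>T) / |\<theta>|\<close> with \<open>u = \<theta> / |\<theta>|\<close>. Writing \<open>Y = \<theta> + \<sigma> Z\<close> with \<open>Z\<close> standard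
  normal, \<open>(\<Pi>(Y) - \<Pi>(\<theta>)) / \<sigma>\<close> therefore tends to \<open>(Z - (u \<bullet> Z) u) / |\<theta>|\<close> pointwise, and since
  \<open>\<Pi>\<close> is 1-Lipschitz it is dominated by \<open>|Z|\<close>. Dominated convergence gives
  \<open>M / \<sigma>\<^sup>2 \<rightarrow> E |Z - (u \<bullet> Z) u|\<^sup>2 / |\<theta>|\<^sup>2 = (n - 1) / |\<theta>|\<^sup>2\<close>.
  For the excess risk, every unit vector \<open>p\<close> satisfies \<open>|p - \<theta>|\<^sup>2 - (|\<theta>| - 1)\<^sup>2 = |\<theta>| |p - u|\<^sup>2\<close>,
  so for small \<open>\<sigma>\<close> the excess integrand is \<open>|\<theta>|\<close> times the misspecified one, while for all
  \<open>\<sigma>\<close> it lies between \<open>0\<close> and \<open>(|\<theta>| + 3) \<sigma>\<^sup>2 |Z|\<^sup>2\<close>.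
\<close>

lemma proj_C_eq_sgn:
  fixes y :: "'a::euclidean_space"
  assumes "norm y > 1"
  shows "proj_C y = sgn y"
  unfolding proj_C_def unit_ball_C_def
proof (rule closest_point_unique[symmetric])
  show "\<forall>z\<in>cball 0 1. dist y (sgn y) \<le> dist y z"
  proof
    fix z :: 'a assume "z \<in> cball 0 1"
    have "y - sgn y = (1 - 1 / norm y) *\<^sub>R y"
      by (simp add: sgn_div_norm scaleR_diff_left divide_inverse_commute)
    then have "dist y (sgn y) = norm ((1 - 1 / norm y) *\<^sub>R y)"
      by (simp add: dist_norm)
    also have "\<dots> = (1 - 1 / norm y) * norm y"
      using assms by (simp add: abs_of_nonneg divide_le_eq)
    also have "\<dots> = norm y - 1"
      using assms by (auto simp: field_simps)
    also have "\<dots> \<le> dist y z"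
      using \<open>z \<in> cball 0 1\<close> norm_triangle_ineq2[of y z] by (simp add: dist_norm)
    finally show "dist y (sgn y) \<le> dist y z" .
  qed
qed (auto simp: norm_sgn)

lemma dist_proj_C_le: "dist (proj_C x) (proj_C y) \<le> dist x (y::'a::euclidean_space)"
  unfolding proj_C_def unit_ball_C_def by (rule closest_point_lipschitz) auto

lemma norm_proj_C_le: "norm (proj_C (x::'a::euclidean_space)) \<le> 1"
  using closest_point_in_set[of "unit_ball_C::'a set" x] by (auto simp: proj_C_def unit_ball_C_def)

lemma borel_measurable_proj_C[measurable]: "(proj_C :: 'a::euclidean_space \<Rightarrow> 'a) \<in> borel_measurable borel"
  unfolding proj_C_def unit_ball_C_def
  by (intro borel_measurable_continuous_onI continuous_on_closest_point) auto

lemma sq_dist_scaled_unit: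
  fixes p u :: "'a::real_inner"
  assumes "norm u = 1"
  shows "(norm (p - r *\<^sub>R u))\<^sup>2 - (r - 1)\<^sup>2 = (norm (p - u))\<^sup>2 + 2 * (r - 1) * (1 - p \<bullet> u)"
proof -
  have "u \<bullet> u = 1" using assms by (simp add: dot_square_norm)
  then show ?thesis unfolding power2_norm_eq_inner
    by (simp add: inner_diff_left inner_diff_right inner_commute algebra_simps power2_eq_square)
qed

lemma sq_dist_units:
  fixes p u :: "'a::real_inner"
  assumes "norm p = 1" "norm u = 1"
  shows "(norm (p - u))\<^sup>2 = 2 - 2 * (p \<bullet> u)"
proof -
  have "p \<bullet> p = 1" "u \<bullet> u = 1" using assms by (simp_all add: dot_square_norm)
  then show ?thesis unfolding power2_norm_eq_inner
    by (simp add: inner_diff_left inner_diff_right inner_commute)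
qed

lemma excess_sq_dist_sphere:
  fixes \<theta> p :: "'a::real_inner"
  assumes "norm \<theta> > 1" and "norm p = 1"
  shows "(norm (p - \<theta>))\<^sup>2 - (norm \<theta> - 1)\<^sup>2 = norm \<theta> * (norm (p - sgn \<theta>))\<^sup>2"
proof -
  have u: "norm (sgn \<theta>) = 1" and th: "\<theta> = norm \<theta> *\<^sub>R sgn \<theta>"
    using assms(1) by (auto simp: norm_sgn sgn_div_norm field_simps)
  have "(norm (p - \<theta>))\<^sup>2 - (norm \<theta> - 1)\<^sup>2 = (norm (p - sgn \<theta>))\<^sup>2 + 2 * (norm \<theta> - 1) * (1 - p \<bullet> sgn \<theta>)"
    by (subst (1) th) (rule sq_dist_scaled_unit[OF u])
  also have "\<dots> = norm \<theta> * (norm (p - sgn \<theta>))\<^sup>2"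
    unfolding sq_dist_units[OF assms(2) u] by (simp add: algebra_simps)
  finally show ?thesis .
qed

lemma sq_dist_proj_C_outside:
  fixes \<theta> :: "'a::euclidean_space"
  assumes "norm \<theta> > 1"
  shows "(norm (proj_C \<theta> - \<theta>))\<^sup>2 = (norm \<theta> - 1)\<^sup>2"
proof -
  have "\<theta> \<noteq> 0" using assms by auto
  then show ?thesis
    using excess_sq_dist_sphere[OF assms, of "sgn \<theta>"] assms by (simp add: proj_C_eq_sgn norm_sgn)
qed

lemma excess_sq_dist_proj_C_bounds:
  fixes \<theta> y :: "'a::euclidean_space"
  assumes r1: "norm \<theta> > 1"
  shows "0 \<le> (norm (proj_C y - \<theta>))\<^sup>2 - (norm \<theta> - 1)\<^sup>2"
    and "(norm (proj_C y - \<theta>))\<^sup>2 - (norm \<theta> - 1)\<^sup>2 \<le> (norm \<theta> + 3) * (norm (y - \<theta>))\<^sup>2"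
proof -
  define p u r where "p = proj_C y" and "u = sgn \<theta>" and "r = norm \<theta>"
  have nu: "norm u = 1" and th: "\<theta> = r *\<^sub>R u"
    using r1 by (auto simp: u_def r_def norm_sgn sgn_div_norm field_simps)
  have d: "norm (p - u) \<le> norm (y - \<theta>)"
    using dist_proj_C_le[of y \<theta>] r1 by (simp add: p_def u_def proj_C_eq_sgn dist_norm)
  have "p \<bullet> u \<le> norm p * norm u" by (rule norm_cauchy_schwarz)
  then have pu: "p \<bullet> u \<le> 1" using nu norm_proj_C_le[of y] by (simp add: p_def)
  have eq: "(norm (p - \<theta>))\<^sup>2 - (r - 1)\<^sup>2 = (norm (p - u))\<^sup>2 + 2 * (r - 1) * (1 - p \<bullet> u)"
    unfolding th by (rule sq_dist_scaled_unit[OF nu])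
  show "0 \<le> (norm (proj_C y - \<theta>))\<^sup>2 - (norm \<theta> - 1)\<^sup>2"
    using eq r1 pu by (simp add: p_def r_def)
  have sq: "(norm (p - u))\<^sup>2 \<le> (norm (y - \<theta>))\<^sup>2"
    using d by (simp add: power_mono)
  have "(norm (p - \<theta>))\<^sup>2 - (r - 1)\<^sup>2 \<le> (r + 3) * (norm (y - \<theta>))\<^sup>2"
  proof (cases "norm y > 1")
    case True
    then have "norm p = 1" by (auto simp: p_def proj_C_eq_sgn norm_sgn)
    then have "(norm (p - \<theta>))\<^sup>2 - (r - 1)\<^sup>2 = r * (norm (p - u))\<^sup>2"
      using excess_sq_dist_sphere[OF r1] by (simp add: u_def r_def)
    also have "\<dots> \<le> (r + 3) * (norm (y - \<theta>))\<^sup>2"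
      using sq r1 by (intro mult_mono) (auto simp: r_def)
    finally show ?thesis .
  next
    case False
    have "r - 1 \<le> norm \<theta> - norm y" using False by (simp add: r_def)
    also have "\<dots> \<le> norm (y - \<theta>)" using norm_triangle_ineq3[of \<theta> y] by (simp add: norm_minus_commute)
    finally have r_le: "r - 1 \<le> norm (y - \<theta>)" .
    have "1 - p \<bullet> u = u \<bullet> (u - p)" using nu by (simp add: inner_diff_right inner_commute dot_square_norm)
    also have "\<dots> \<le> norm u * norm (u - p)" by (rule norm_cauchy_schwarz)
    also have "\<dots> \<le> norm (y - \<theta>)" using d nu by (simp add: norm_minus_commute)
    finally have "2 * (r - 1) * (1 - p \<bullet> u) \<le> 2 * norm (y - \<theta>) * norm (y - \<theta>)"
      using r_le r1 pu by (intro mult_mono) (auto simp: r_def)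
    then have "(norm (p - \<theta>))\<^sup>2 - (r - 1)\<^sup>2 \<le> 3 * (norm (y - \<theta>))\<^sup>2"
      using eq sq by (simp add: power2_eq_square)
    also have "\<dots> \<le> (r + 3) * (norm (y - \<theta>))\<^sup>2"
      using r1 by (intro mult_right_mono) (auto simp: r_def)
    finally show ?thesis .
  qed
  then show "(norm (proj_C y - \<theta>))\<^sup>2 - (norm \<theta> - 1)\<^sup>2 \<le> (norm \<theta> + 3) * (norm (y - \<theta>))\<^sup>2"
    by (simp add: p_def r_def)
qed

lemma norm_difference_quotient_tendsto:
  fixes \<theta> z :: "'a::real_inner"
  assumes "\<theta> \<noteq> 0"
  shows "((\<lambda>\<sigma>. (norm (\<theta> + \<sigma> *\<^sub>R z) - norm \<theta>) / \<sigma>) \<longlongrightarrow> sgn \<theta> \<bullet> z) (at 0)"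
proof -
  have "((\<lambda>\<sigma>. \<theta> + \<sigma> *\<^sub>R z) has_derivative (\<lambda>h. h *\<^sub>R z)) (at 0)"
    by (auto intro!: derivative_eq_intros)
  from has_derivative_compose[OF this has_derivative_norm[of "\<theta> + 0 *\<^sub>R z"]]
  have "((\<lambda>\<sigma>. norm (\<theta> + \<sigma> *\<^sub>R z)) has_derivative (\<lambda>h. (sgn \<theta> \<bullet> z) * h)) (at 0)"
    using assms by (simp add: inner_commute mult.commute)
  then have "((\<lambda>\<sigma>. norm (\<theta> + \<sigma> *\<^sub>R z)) has_field_derivative sgn \<theta> \<bullet> z) (at 0)"
    by (simp add: has_field_derivative_def)
  then show ?thesis by (simp add: has_field_derivative_iff)
qed

lemma difference_quotient_of_rescalings:
  fixes \<theta> z :: "'a::real_vector"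
  assumes "\<sigma> \<noteq> 0" "N \<noteq> 0" "r \<noteq> 0"
  shows "(1 / \<sigma>) *\<^sub>R ((1 / N) *\<^sub>R (\<theta> + \<sigma> *\<^sub>R z) - (1 / r) *\<^sub>R \<theta>)
       = (1 / N) *\<^sub>R z - ((N - r) / \<sigma> / (N * r)) *\<^sub>R \<theta>"
proof -
  have "(1 / \<sigma>) *\<^sub>R ((1 / N) *\<^sub>R (\<theta> + \<sigma> *\<^sub>R z) - (1 / r) *\<^sub>R \<theta>)
       = (1 / N) *\<^sub>R z + ((1 / N - 1 / r) / \<sigma>) *\<^sub>R \<theta>"
    using assms by (simp add: scaleR_add_right scaleR_diff_right scaleR_diff_left diff_divide_distrib mult.commute)
  also have "(1 / N - 1 / r) / \<sigma> = - ((N - r) / \<sigma> / (N * r))"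
    using assms by (simp add: field_simps)
  finally show ?thesis by simp
qed

lemma proj_C_difference_quotient_tendsto:
  fixes \<theta> z :: "'a::euclidean_space"
  assumes r1: "norm \<theta> > 1"
  shows "((\<lambda>\<sigma>. (1 / \<sigma>) *\<^sub>R (proj_C (\<theta> + \<sigma> *\<^sub>R z) - proj_C \<theta>))
           \<longlongrightarrow> (1 / norm \<theta>) *\<^sub>R (z - (sgn \<theta> \<bullet> z) *\<^sub>R sgn \<theta>)) (at_right 0)"
proof -
  define r N where "r = norm \<theta>" and "N \<sigma> = norm (\<theta> + \<sigma> *\<^sub>R z)" for \<sigma>
  have "(N \<longlongrightarrow> norm (\<theta> + 0 *\<^sub>R z)) (at 0)" unfolding N_def by (intro tendsto_intros)
  then have N: "(N \<longlongrightarrow> r) (at 0)" by (simp add: r_def)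
  have Q: "((\<lambda>\<sigma>. (N \<sigma> - r) / \<sigma>) \<longlongrightarrow> sgn \<theta> \<bullet> z) (at 0)"
    unfolding N_def r_def using r1 by (intro norm_difference_quotient_tendsto) auto
  have "((\<lambda>\<sigma>. (1 / N \<sigma>) *\<^sub>R z - ((N \<sigma> - r) / \<sigma> / (N \<sigma> * r)) *\<^sub>R \<theta>)
          \<longlongrightarrow> (1 / r) *\<^sub>R z - ((sgn \<theta> \<bullet> z) / (r * r)) *\<^sub>R \<theta>) (at 0)"
    using r1 by (intro tendsto_intros N Q) (auto simp: r_def)
  moreover have "(1 / r) *\<^sub>R z - ((sgn \<theta> \<bullet> z) / (r * r)) *\<^sub>R \<theta> = (1 / r) *\<^sub>R (z - (sgn \<theta> \<bullet> z) *\<^sub>R sgn \<theta>)"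
    using r1 by (simp add: sgn_div_norm r_def field_simps)
  ultimately have lim: "((\<lambda>\<sigma>. (1 / N \<sigma>) *\<^sub>R z - ((N \<sigma> - r) / \<sigma> / (N \<sigma> * r)) *\<^sub>R \<theta>)
          \<longlongrightarrow> (1 / r) *\<^sub>R (z - (sgn \<theta> \<bullet> z) *\<^sub>R sgn \<theta>)) (at_right 0)"
    by (auto intro: tendsto_mono[OF at_le[of "{0<..}"]])
  have "eventually (\<lambda>\<sigma>. N \<sigma> > 1) (at 0)"
    using N r1 by (intro order_tendstoD) (auto simp: r_def)
  then have "eventually (\<lambda>\<sigma>. N \<sigma> > 1) (at_right 0)"
    by (simp add: eventually_at_split)
  moreover note eventually_at_right_less[of 0]
  ultimately have "eventually (\<lambda>\<sigma>. (1 / N \<sigma>) *\<^sub>R z - ((N \<sigma> - r) / \<sigma> / (N \<sigma> * r)) *\<^sub>R \<theta> =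
      (1 / \<sigma>) *\<^sub>R (proj_C (\<theta> + \<sigma> *\<^sub>R z) - proj_C \<theta>)) (at_right 0)"
  proof eventually_elim
    case (elim \<sigma>)
    then have "proj_C (\<theta> + \<sigma> *\<^sub>R z) = (1 / N \<sigma>) *\<^sub>R (\<theta> + \<sigma> *\<^sub>R z)"
      by (simp add: proj_C_eq_sgn sgn_div_norm N_def divide_inverse_commute)
    moreover have "proj_C \<theta> = (1 / r) *\<^sub>R \<theta>"
      using r1 by (simp add: proj_C_eq_sgn sgn_div_norm r_def divide_inverse_commute)
    moreover have "(1 / \<sigma>) *\<^sub>R ((1 / N \<sigma>) *\<^sub>R (\<theta> + \<sigma> *\<^sub>R z) - (1 / r) *\<^sub>R \<theta>)
        = (1 / N \<sigma>) *\<^sub>R z - ((N \<sigma> - r) / \<sigma> / (N \<sigma> * r)) *\<^sub>R \<theta>"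
      using elim r1 by (intro difference_quotient_of_rescalings) (auto simp: r_def)
    ultimately show ?case by simp
  qed
  with lim show ?thesis unfolding r_def by (rule Lim_transform_eventually)
qed

lemma proj_C_rescaled_increment_sq_tendsto:
  fixes \<theta> z :: "'a::euclidean_space"
  assumes "norm \<theta> > 1"
  shows "((\<lambda>\<sigma>. (norm ((1 / \<sigma>) *\<^sub>R (proj_C (\<theta> + \<sigma> *\<^sub>R z) - proj_C \<theta>)))\<^sup>2)
           \<longlongrightarrow> (norm (z - (sgn \<theta> \<bullet> z) *\<^sub>R sgn \<theta>))\<^sup>2 / (norm \<theta>)\<^sup>2) (at_right 0)"
  using tendsto_power[OF tendsto_norm[OF proj_C_difference_quotient_tendsto[OF assms]], where n = 2]
  by (simp add: power_mult_distrib power_divide)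

lemma norm_proj_C_rescaled_increment_le:
  fixes \<theta> z :: "'a::euclidean_space"
  assumes "\<sigma> > 0"
  shows "norm ((1 / \<sigma>) *\<^sub>R (proj_C (\<theta> + \<sigma> *\<^sub>R z) - proj_C \<theta>)) \<le> norm z"
  using dist_proj_C_le[of "\<theta> + \<sigma> *\<^sub>R z" \<theta>] assms by (simp add: dist_norm divide_le_eq mult.commute)

abbreviation std_gaussian_density :: "'a::euclidean_space \<Rightarrow> real" where
  "std_gaussian_density \<equiv> gaussian_density 0 1"

lemma gaussian_density_nonneg: "gaussian_density \<mu> \<sigma> y \<ge> 0"
  unfolding gaussian_density_def by simp

lemma borel_measurable_gaussian_density[measurable]:
  "gaussian_density (\<mu>::'a::euclidean_space) \<sigma> \<in> borel_measurable borel"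
  unfolding gaussian_density_def by measurable

lemma gaussian_density_affine:
  fixes z :: "'a::euclidean_space"
  assumes s: "\<sigma> > 0"
  shows "\<sigma> ^ DIM('a) * gaussian_density \<theta> \<sigma> (\<theta> + \<sigma> *\<^sub>R z) = std_gaussian_density z"
proof -
  have "(norm (\<sigma> *\<^sub>R z))\<^sup>2 / (2 * \<sigma>\<^sup>2) = (norm z)\<^sup>2 / 2"
    using s by (simp add: power_mult_distrib)
  moreover have "\<sigma> ^ DIM('a) * (2 * pi * \<sigma>\<^sup>2) powr (- real DIM('a) / 2) = (2 * pi) powr (- real DIM('a) / 2)"
  proof -
    have "(2 * pi * \<sigma>\<^sup>2) powr (- real DIM('a) / 2) =
        (2 * pi) powr (- real DIM('a) / 2) * (\<sigma> powr 2) powr (- real DIM('a) / 2)"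
      using s by (simp add: powr_mult powr_realpow)
    also have "(\<sigma> powr 2) powr (- real DIM('a) / 2) = \<sigma> powr (- real DIM('a))"
      by (simp add: powr_powr)
    finally have "\<sigma> ^ DIM('a) * (2 * pi * \<sigma>\<^sup>2) powr (- real DIM('a) / 2) =
        (2 * pi) powr (- real DIM('a) / 2) * (\<sigma> powr real DIM('a) * \<sigma> powr (- real DIM('a)))"
      using s by (simp add: powr_realpow)
    also have "\<sigma> powr real DIM('a) * \<sigma> powr (- real DIM('a)) = 1"
      using s by (simp add: powr_add[symmetric])
    finally show ?thesis by simp
  qed
  ultimately show ?thesis
    unfolding gaussian_density_def by (simp add: mult.assoc[symmetric])
qed

lemma integral_gaussian_eq_std:
  fixes f :: "'a::euclidean_space \<Rightarrow> real"
  assumes s: "\<sigma> > 0" and [measurable]: "f \<in> borel_measurable borel"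
  shows "(\<integral>y. f y \<partial>gaussian \<theta> \<sigma>) = (\<integral>z. std_gaussian_density z * f (\<theta> + \<sigma> *\<^sub>R z) \<partial>lborel)"
proof -
  let ?T = "\<lambda>x::'a. \<theta> + \<sigma> *\<^sub>R x"
  let ?g = "\<lambda>y. gaussian_density \<theta> \<sigma> y * f y"
  have "(\<integral>y. f y \<partial>gaussian \<theta> \<sigma>) = (\<integral>y. ?g y \<partial>lborel)"
    unfolding gaussian_def by (subst integral_density) (auto simp: gaussian_density_nonneg)
  also have "\<dots> = (\<integral>y. ?g y \<partial>density (distr lborel borel ?T) (\<lambda>_. \<bar>\<sigma>\<bar> ^ DIM('a)))"
    using s by (subst lborel_affine[of \<sigma> \<theta>]) simp_all
  also have "\<dots> = (\<integral>z. \<bar>\<sigma>\<bar> ^ DIM('a) * ?g (?T z) \<partial>lborel)"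
    by (subst integral_density) (auto simp: integral_distr)
  also have "\<dots> = (\<integral>z. std_gaussian_density z * f (\<theta> + \<sigma> *\<^sub>R z) \<partial>lborel)"
    using s gaussian_density_affine[OF s, of \<theta>] by (simp add: mult.assoc[symmetric])
  finally show ?thesis .
qed

lemma std_gaussian_density_eq_prod:
  fixes z :: "'a::euclidean_space"
  shows "std_gaussian_density z = (\<Prod>b\<in>Basis. std_normal_density (z \<bullet> b))"
proof -
  have "(\<Prod>b\<in>Basis. std_normal_density (z \<bullet> b)) =
      (1 / sqrt (2 * pi)) ^ DIM('a) * (\<Prod>b\<in>Basis. exp (- (z \<bullet> b)\<^sup>2 / 2))"
    unfolding std_normal_density_def by (simp only: prod.distrib) simp
  also have "(\<Prod>b\<in>Basis. exp (- (z \<bullet> b)\<^sup>2 / 2)) = exp (- (norm z)\<^sup>2 / 2)"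
    unfolding power2_norm_eq_inner euclidean_inner[of z z]
    by (simp add: exp_sum[symmetric] sum_negf sum_divide_distrib power2_eq_square)
  also have "(1 / sqrt (2 * pi)) ^ DIM('a) = ((2 * pi) powr (-1/2)) powr real DIM('a)"
    by (simp add: powr_realpow powr_minus_divide powr_half_sqrt)
  also have "\<dots> = (2 * pi) powr (- real DIM('a) / 2)"
    by (simp add: powr_powr)
  finally show ?thesis unfolding gaussian_density_def by simp
qed

lemma has_bochner_integral_prod_std_normal_moments:
  fixes k :: "'a::euclidean_space \<Rightarrow> nat"
  shows "has_bochner_integral lborel (\<lambda>z::'a. \<Prod>b\<in>Basis. std_normal_density (z \<bullet> b) * (z \<bullet> b) ^ k b)
           (\<Prod>b\<in>Basis. \<integral>x. std_normal_density x * x ^ k b \<partial>lborel)"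
proof -
  interpret product_sigma_finite "\<lambda>_::'a. lborel::real measure" by standard
  let ?E = "\<lambda>f. \<Sum>b\<in>(Basis::'a set). f b *\<^sub>R b"
  let ?F = "\<lambda>z::'a. \<Prod>b\<in>Basis. std_normal_density (z \<bullet> b) * (z \<bullet> b) ^ k b"
  let ?G = "\<lambda>f. \<Prod>b\<in>Basis. std_normal_density (f b) * (f b) ^ k b"
  have E[measurable]: "?E \<in> measurable (\<Pi>\<^sub>M b\<in>Basis. lborel) borel" by measurable
  have F[measurable]: "?F \<in> borel_measurable borel" by measurable
  have FE: "?F (?E f) = ?G f" for f
    by (intro prod.cong refl) (simp add: inner_sum_left inner_Basis if_distrib cong: if_cong)
  have "integrable (\<Pi>\<^sub>M b\<in>Basis. lborel) ?G"
    by (rule product_integrable_prod) (auto intro: integrable_std_normal_moment)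
  moreover have "integral\<^sup>L (\<Pi>\<^sub>M b\<in>Basis. lborel) ?G = (\<Prod>b\<in>Basis. \<integral>x. std_normal_density x * x ^ k b \<partial>lborel)"
    by (rule product_integral_prod) (auto intro: integrable_std_normal_moment)
  ultimately show ?thesis
    unfolding has_bochner_integral_iff
    by (subst (1 2) lborel_eq) (simp add: integrable_distr_eq[OF E F] integral_distr[OF E F] FE)
qed

lemma has_bochner_integral_std_gaussian_basis_moment:
  fixes b c :: "'a::euclidean_space"
  assumes b: "b \<in> Basis" and c: "c \<in> Basis"
  shows "has_bochner_integral lborel (\<lambda>z::'a. std_gaussian_density z * ((z \<bullet> b) * (z \<bullet> c))) (if b = c then 1 else 0)"
proof -
  define k where "k b' = (if b' = b then 1 else 0) + (if b' = c then 1 else 0::nat)" for b'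
  have coord: "(\<Prod>b'\<in>Basis. (z \<bullet> b') ^ (if b' = a then 1 else 0)) = z \<bullet> a" if "a \<in> Basis" for a and z :: 'a
    using that by (simp add: if_distrib prod.delta cong: if_cong)
  have "std_gaussian_density z * ((z \<bullet> b) * (z \<bullet> c)) =
      (\<Prod>b'\<in>Basis. std_normal_density (z \<bullet> b') * (z \<bullet> b') ^ k b')" for z :: 'a
    unfolding std_gaussian_density_eq_prod k_def power_add prod.distrib coord[OF b] coord[OF c] by simp
  moreover have "(\<Prod>b'\<in>Basis. \<integral>x. std_normal_density x * x ^ k b' \<partial>lborel) = (if b = c then 1 else 0)"
  proof (cases "b = c")
    case True
    then have "(\<integral>x. std_normal_density x * x ^ k b' \<partial>lborel) = 1" for b'
      using integral_std_normal_moment_even[of 0] integral_std_normal_moment_even[of 1]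
      by (simp add: k_def power2_eq_square)
    then show ?thesis using True by simp
  next
    case False
    then have "(\<integral>x. std_normal_density x * x ^ k b \<partial>lborel) = 0"
      using integral_std_normal_moment_odd[of 0] by (simp add: k_def)
    then show ?thesis using False b by (auto intro: prod_zero)
  qed
  ultimately show ?thesis
    using has_bochner_integral_prod_std_normal_moments[of k] by simp
qed

lemma has_bochner_integral_std_gaussian_density:
  "has_bochner_integral lborel (std_gaussian_density :: 'a::euclidean_space \<Rightarrow> real) 1"
  using has_bochner_integral_prod_std_normal_moments[of "\<lambda>_::'a. 0"]
    integral_std_normal_moment_even[of 0]
  by (simp add: std_gaussian_density_eq_prod[abs_def])

lemma has_bochner_integral_std_gaussian_inner_mult:
  fixes a c :: "'a::euclidean_space"
  shows "has_bochner_integral lborel (\<lambda>z. std_gaussian_density z * ((a \<bullet> z) * (c \<bullet> z))) (a \<bullet> c)"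
proof -
  have "(a \<bullet> z) * (c \<bullet> z) = (\<Sum>b\<in>Basis. \<Sum>b'\<in>Basis. (a \<bullet> b) * (c \<bullet> b') * ((z \<bullet> b) * (z \<bullet> b')))" for z :: 'a
    unfolding euclidean_inner[of a z] euclidean_inner[of c z] sum_product by (simp add: mult_ac)
  then have "std_gaussian_density z * ((a \<bullet> z) * (c \<bullet> z)) = (\<Sum>b\<in>Basis. \<Sum>b'\<in>Basis.
      (a \<bullet> b) * (c \<bullet> b') * (std_gaussian_density z * ((z \<bullet> b) * (z \<bullet> b'))))" for z :: 'a
    by (simp add: sum_distrib_left mult_ac)
  moreover have "has_bochner_integral lborel
      (\<lambda>z. \<Sum>b\<in>Basis. \<Sum>b'\<in>Basis. (a \<bullet> b) * (c \<bullet> b') * (std_gaussian_density z * ((z \<bullet> b) * (z \<bullet> b'))))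
      (\<Sum>b\<in>Basis. \<Sum>b'\<in>Basis. (a \<bullet> b) * (c \<bullet> b') * (if b = b' then 1 else 0))"
    by (intro has_bochner_integral_sum has_bochner_integral_mult_right
        has_bochner_integral_std_gaussian_basis_moment)
  moreover have "(\<Sum>b\<in>Basis. \<Sum>b'\<in>Basis. (a \<bullet> b) * (c \<bullet> b') * (if b = b' then 1 else 0)) = a \<bullet> c"
    by (simp add: if_distrib euclidean_inner[of a c] cong: if_cong)
  ultimately show ?thesis by simp
qed

lemma has_bochner_integral_std_gaussian_norm_sq:
  "has_bochner_integral lborel (\<lambda>z::'a::euclidean_space. std_gaussian_density z * (norm z)\<^sup>2) (real DIM('a))"
proof -
  have "std_gaussian_density z * (norm z)\<^sup>2 = (\<Sum>b\<in>Basis. std_gaussian_density z * ((b \<bullet> z) * (b \<bullet> z)))" for z :: 'a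
    by (simp add: power2_norm_eq_inner euclidean_inner[of z z] sum_distrib_left inner_commute)
  moreover have "has_bochner_integral lborel (\<lambda>z::'a. \<Sum>b\<in>Basis. std_gaussian_density z * ((b \<bullet> z) * (b \<bullet> z)))
      (\<Sum>b\<in>(Basis::'a set). b \<bullet> b)"
    by (intro has_bochner_integral_sum has_bochner_integral_std_gaussian_inner_mult)
  ultimately show ?thesis by simp
qed

lemma has_bochner_integral_std_gaussian_orthogonal_sq:
  fixes u :: "'a::euclidean_space"
  assumes "norm u = 1"
  shows "has_bochner_integral lborel (\<lambda>z. std_gaussian_density z * (norm (z - (u \<bullet> z) *\<^sub>R u))\<^sup>2)
           (real DIM('a) - 1)"
proof -
  have uu: "u \<bullet> u = 1" using assms by (simp add: dot_square_norm)
  then have "(norm (z - (u \<bullet> z) *\<^sub>R u))\<^sup>2 = (norm z)\<^sup>2 - (u \<bullet> z) * (u \<bullet> z)" for z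
    unfolding power2_norm_eq_inner
    by (simp add: inner_diff_left inner_diff_right inner_commute algebra_simps)
  moreover have "has_bochner_integral lborel
      (\<lambda>z. std_gaussian_density z * (norm z)\<^sup>2 - std_gaussian_density z * ((u \<bullet> z) * (u \<bullet> z))) (real DIM('a) - u \<bullet> u)"
    by (intro has_bochner_integral_diff has_bochner_integral_std_gaussian_norm_sq
        has_bochner_integral_std_gaussian_inner_mult)
  ultimately show ?thesis
    using uu by (simp add: right_diff_distrib)
qed

lemma integral_dominated_convergence_at_right_0:
  fixes G :: "real \<Rightarrow> 'a \<Rightarrow> 'b::{banach, second_countable_topology}"
  assumes [measurable]: "\<And>\<sigma>. G \<sigma> \<in> borel_measurable M" "g \<in> borel_measurable M"
    and "integrable M W"
    and "\<And>z. ((\<lambda>\<sigma>. G \<sigma> z) \<longlongrightarrow> g z) (at_right 0)"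
    and "\<And>\<sigma> z. \<sigma> > 0 \<Longrightarrow> norm (G \<sigma> z) \<le> W z"
  shows "((\<lambda>\<sigma>. integral\<^sup>L M (G \<sigma>)) \<longlongrightarrow> integral\<^sup>L M g) (at_right 0)"
  unfolding filterlim_at_right_to_top
proof (rule integral_dominated_convergence_at_top[where w = W])
  show "AE z in M. ((\<lambda>t. G (inverse t) z) \<longlongrightarrow> g z) at_top"
    using assms(4) unfolding filterlim_at_right_to_top by simp
  show "\<forall>\<^sub>F t in at_top. AE z in M. norm (G (inverse t) z) \<le> W z"
    using eventually_gt_at_top[of "0::real"] by eventually_elim (simp add: assms(5))
qed (use assms(3) in auto)

lemma misspec_risk_proj_C_div_sq:
  fixes \<theta> :: "'a::euclidean_space"
  assumes s: "\<sigma> > 0"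
  shows "misspec_risk proj_C \<theta> \<sigma> / \<sigma>\<^sup>2 =
    (\<integral>z. std_gaussian_density z * (norm ((1 / \<sigma>) *\<^sub>R (proj_C (\<theta> + \<sigma> *\<^sub>R z) - proj_C \<theta>)))\<^sup>2 \<partial>lborel)"
proof -
  have "misspec_risk proj_C \<theta> \<sigma> / \<sigma>\<^sup>2 =
      (\<integral>z. std_gaussian_density z * (norm (proj_C (\<theta> + \<sigma> *\<^sub>R z) - proj_C \<theta>))\<^sup>2 \<partial>lborel) / \<sigma>\<^sup>2"
    unfolding misspec_risk_def using s by (subst integral_gaussian_eq_std) simp_all
  also have "\<dots> = (\<integral>z. std_gaussian_density z * (norm ((1 / \<sigma>) *\<^sub>R (proj_C (\<theta> + \<sigma> *\<^sub>R z) - proj_C \<theta>)))\<^sup>2 \<partial>lborel)"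
    using s by (simp add: power_mult_distrib power_divide)
  finally show ?thesis .
qed

lemma excess_risk_proj_C_div_sq:
  fixes \<theta> :: "'a::euclidean_space"
  assumes s: "\<sigma> > 0"
  shows "excess_risk proj_C \<theta> \<sigma> / \<sigma>\<^sup>2 =
    (\<integral>z. std_gaussian_density z *
       (((norm (proj_C (\<theta> + \<sigma> *\<^sub>R z) - \<theta>))\<^sup>2 - (norm (proj_C \<theta> - \<theta>))\<^sup>2) / \<sigma>\<^sup>2) \<partial>lborel)"
proof -
  let ?g = "\<lambda>z. (norm (proj_C (\<theta> + \<sigma> *\<^sub>R z) - \<theta>))\<^sup>2" and ?c = "(norm (proj_C \<theta> - \<theta>))\<^sup>2"
  have bound: "?g z \<le> (1 + norm \<theta>)\<^sup>2" for z
    using norm_triangle_ineq4[of "proj_C (\<theta> + \<sigma> *\<^sub>R z)" \<theta>] norm_proj_C_le[of "\<theta> + \<sigma> *\<^sub>R z"]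
    by (intro power_mono) auto
  have "integrable lborel (\<lambda>z. std_gaussian_density z * ?g z)"
  proof (rule Bochner_Integration.integrable_bound)
    show "integrable lborel (\<lambda>z::'a. (1 + norm \<theta>)\<^sup>2 * std_gaussian_density z)"
      using has_bochner_integral_std_gaussian_density by (auto simp: has_bochner_integral_iff)
    show "AE z in lborel. norm (std_gaussian_density z * ?g z) \<le> norm ((1 + norm \<theta>)\<^sup>2 * std_gaussian_density z)"
      using bound gaussian_density_nonneg by (auto simp: abs_mult mult.commute intro!: mult_left_mono)
  qed simp
  then have "(\<integral>z. std_gaussian_density z * ?g z \<partial>lborel) - ?c =
      (\<integral>z. std_gaussian_density z * ?g z - ?c * std_gaussian_density z \<partial>lborel)"
    using has_bochner_integral_std_gaussian_density[where 'a='a] by (simp add: has_bochner_integral_iff)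
  then show ?thesis
    unfolding excess_risk_def using s
    by (subst integral_gaussian_eq_std) (simp_all add: right_diff_distrib mult.commute)
qed

lemma misspec_risk_proj_C_tendsto:
  fixes \<theta> :: "'a::euclidean_space"
  assumes r1: "norm \<theta> > 1"
  shows "((\<lambda>\<sigma>. misspec_risk proj_C \<theta> \<sigma> / \<sigma>\<^sup>2) \<longlongrightarrow> (real DIM('a) - 1) / (norm \<theta>)\<^sup>2) (at_right 0)"
proof -
  define P where "P z = (norm (z - (sgn \<theta> \<bullet> z) *\<^sub>R sgn \<theta>))\<^sup>2" for z
  have [measurable]: "P \<in> borel_measurable borel" unfolding P_def by measurable
  have lim: "((\<lambda>\<sigma>. \<integral>z. std_gaussian_density z * (norm ((1 / \<sigma>) *\<^sub>R (proj_C (\<theta> + \<sigma> *\<^sub>R z) - proj_C \<theta>)))\<^sup>2 \<partial>lborel)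
      \<longlongrightarrow> (\<integral>z. std_gaussian_density z * (P z / (norm \<theta>)\<^sup>2) \<partial>lborel)) (at_right 0)"
  proof (rule integral_dominated_convergence_at_right_0[where W = "\<lambda>z. std_gaussian_density z * (norm z)\<^sup>2"])
    show "integrable lborel (\<lambda>z::'a. std_gaussian_density z * (norm z)\<^sup>2)"
      using has_bochner_integral_std_gaussian_norm_sq by (auto simp: has_bochner_integral_iff)
    show "((\<lambda>\<sigma>. std_gaussian_density z * (norm ((1 / \<sigma>) *\<^sub>R (proj_C (\<theta> + \<sigma> *\<^sub>R z) - proj_C \<theta>)))\<^sup>2)
        \<longlongrightarrow> std_gaussian_density z * (P z / (norm \<theta>)\<^sup>2)) (at_right 0)" for z
      unfolding P_def by (intro tendsto_mult_left proj_C_rescaled_increment_sq_tendsto r1)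
    show "norm (std_gaussian_density z * (norm ((1 / \<sigma>) *\<^sub>R (proj_C (\<theta> + \<sigma> *\<^sub>R z) - proj_C \<theta>)))\<^sup>2)
        \<le> std_gaussian_density z * (norm z)\<^sup>2" if "\<sigma> > 0" for \<sigma> z
      using norm_proj_C_rescaled_increment_le[OF that, of \<theta> z] gaussian_density_nonneg[of 0 1 z]
      by (auto simp: abs_mult intro!: mult_left_mono power_mono)
  qed measurable
  have "has_bochner_integral lborel (\<lambda>z. std_gaussian_density z * P z / (norm \<theta>)\<^sup>2)
      ((real DIM('a) - 1) / (norm \<theta>)\<^sup>2)"
    using has_bochner_integral_std_gaussian_orthogonal_sq[of "sgn \<theta>"] r1 unfolding P_def
    by (intro has_bochner_integral_divide_zero) (auto simp: norm_sgn)
  then have val: "(\<integral>z. std_gaussian_density z * (P z / (norm \<theta>)\<^sup>2) \<partial>lborel) = (real DIM('a) - 1) / (norm \<theta>)\<^sup>2"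
    by (simp add: has_bochner_integral_iff)
  have ev: "eventually (\<lambda>\<sigma>. (\<integral>z. std_gaussian_density z *
      (norm ((1 / \<sigma>) *\<^sub>R (proj_C (\<theta> + \<sigma> *\<^sub>R z) - proj_C \<theta>)))\<^sup>2 \<partial>lborel) = misspec_risk proj_C \<theta> \<sigma> / \<sigma>\<^sup>2) (at_right 0)"
    using eventually_at_right_less[of 0] by eventually_elim (simp add: misspec_risk_proj_C_div_sq)
  show ?thesis
    using Lim_transform_eventually[OF lim ev] unfolding val .
qed

lemma proj_C_excess_sq_dist_div_sq_tendsto:
  fixes \<theta> z :: "'a::euclidean_space"
  assumes r1: "norm \<theta> > 1"
  shows "((\<lambda>\<sigma>. ((norm (proj_C (\<theta> + \<sigma> *\<^sub>R z) - \<theta>))\<^sup>2 - (norm (proj_C \<theta> - \<theta>))\<^sup>2) / \<sigma>\<^sup>2)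
           \<longlongrightarrow> (norm (z - (sgn \<theta> \<bullet> z) *\<^sub>R sgn \<theta>))\<^sup>2 / norm \<theta>) (at_right 0)"
proof (rule Lim_transform_eventually)
  have "((\<lambda>\<sigma>. norm \<theta> * (norm ((1 / \<sigma>) *\<^sub>R (proj_C (\<theta> + \<sigma> *\<^sub>R z) - proj_C \<theta>)))\<^sup>2)
      \<longlongrightarrow> norm \<theta> * ((norm (z - (sgn \<theta> \<bullet> z) *\<^sub>R sgn \<theta>))\<^sup>2 / (norm \<theta>)\<^sup>2)) (at_right 0)"
    by (intro tendsto_mult_left proj_C_rescaled_increment_sq_tendsto r1)
  moreover have "\<theta> \<noteq> 0" using r1 by auto
  ultimately show "((\<lambda>\<sigma>. norm \<theta> * (norm ((1 / \<sigma>) *\<^sub>R (proj_C (\<theta> + \<sigma> *\<^sub>R z) - proj_C \<theta>)))\<^sup>2)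
      \<longlongrightarrow> (norm (z - (sgn \<theta> \<bullet> z) *\<^sub>R sgn \<theta>))\<^sup>2 / norm \<theta>) (at_right 0)"
    by (simp add: power2_eq_square)
  have "eventually (\<lambda>\<sigma>. norm (\<theta> + \<sigma> *\<^sub>R z) > 1) (at_right 0)"
    using r1 by (intro order_tendstoD tendsto_eq_intros) auto
  then show "eventually (\<lambda>\<sigma>. norm \<theta> * (norm ((1 / \<sigma>) *\<^sub>R (proj_C (\<theta> + \<sigma> *\<^sub>R z) - proj_C \<theta>)))\<^sup>2
      = ((norm (proj_C (\<theta> + \<sigma> *\<^sub>R z) - \<theta>))\<^sup>2 - (norm (proj_C \<theta> - \<theta>))\<^sup>2) / \<sigma>\<^sup>2) (at_right 0)"
    using eventually_at_right_less[of 0]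
  proof eventually_elim
    case (elim \<sigma>)
    then have "norm (proj_C (\<theta> + \<sigma> *\<^sub>R z)) = 1" by (auto simp: proj_C_eq_sgn norm_sgn)
    with elim show ?case
      using excess_sq_dist_sphere[OF r1, of "proj_C (\<theta> + \<sigma> *\<^sub>R z)"]
      unfolding sq_dist_proj_C_outside[OF r1]
      by (simp add: proj_C_eq_sgn[OF r1] power_mult_distrib power_divide)
  qed
qed

lemma excess_risk_proj_C_tendsto:
  fixes \<theta> :: "'a::euclidean_space"
  assumes r1: "norm \<theta> > 1"
  shows "((\<lambda>\<sigma>. excess_risk proj_C \<theta> \<sigma> / \<sigma>\<^sup>2) \<longlongrightarrow> (real DIM('a) - 1) / norm \<theta>) (at_right 0)"
proof -
  define P where "P z = (norm (z - (sgn \<theta> \<bullet> z) *\<^sub>R sgn \<theta>))\<^sup>2" for z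
  define E where "E \<sigma> z = ((norm (proj_C (\<theta> + \<sigma> *\<^sub>R z) - \<theta>))\<^sup>2 - (norm (proj_C \<theta> - \<theta>))\<^sup>2) / \<sigma>\<^sup>2" for \<sigma> z
  have [measurable]: "P \<in> borel_measurable borel" "E \<sigma> \<in> borel_measurable borel" for \<sigma>
    unfolding P_def E_def by measurable
  have lim: "((\<lambda>\<sigma>. \<integral>z. std_gaussian_density z * E \<sigma> z \<partial>lborel)
      \<longlongrightarrow> (\<integral>z. std_gaussian_density z * (P z / norm \<theta>) \<partial>lborel)) (at_right 0)"
  proof (rule integral_dominated_convergence_at_right_0[where W = "\<lambda>z. (norm \<theta> + 3) * (std_gaussian_density z * (norm z)\<^sup>2)"])
    show "integrable lborel (\<lambda>z::'a. (norm \<theta> + 3) * (std_gaussian_density z * (norm z)\<^sup>2))"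
      using has_bochner_integral_std_gaussian_norm_sq by (auto simp: has_bochner_integral_iff)
    show "((\<lambda>\<sigma>. std_gaussian_density z * E \<sigma> z) \<longlongrightarrow> std_gaussian_density z * (P z / norm \<theta>)) (at_right 0)" for z
      unfolding E_def P_def by (intro tendsto_mult_left proj_C_excess_sq_dist_div_sq_tendsto r1)
    show "norm (std_gaussian_density z * E \<sigma> z) \<le> (norm \<theta> + 3) * (std_gaussian_density z * (norm z)\<^sup>2)"
      if "\<sigma> > 0" for \<sigma> z
      using excess_sq_dist_proj_C_bounds[OF r1, of "\<theta> + \<sigma> *\<^sub>R z"] gaussian_density_nonneg[of 0 1 z] that
      by (auto simp: E_def sq_dist_proj_C_outside[OF r1] abs_mult power_mult_distrib divide_le_eq mult_ac
          intro!: mult_left_mono)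
  qed measurable
  have "has_bochner_integral lborel (\<lambda>z. std_gaussian_density z * P z / norm \<theta>) ((real DIM('a) - 1) / norm \<theta>)"
    using has_bochner_integral_std_gaussian_orthogonal_sq[of "sgn \<theta>"] r1 unfolding P_def
    by (intro has_bochner_integral_divide_zero) (auto simp: norm_sgn)
  then have val: "(\<integral>z. std_gaussian_density z * (P z / norm \<theta>) \<partial>lborel) = (real DIM('a) - 1) / norm \<theta>"
    by (simp add: has_bochner_integral_iff)
  have ev: "eventually (\<lambda>\<sigma>. (\<integral>z. std_gaussian_density z * E \<sigma> z \<partial>lborel) = excess_risk proj_C \<theta> \<sigma> / \<sigma>\<^sup>2) (at_right 0)"
    using eventually_at_right_less[of 0] by eventually_elim (simp add: E_def excess_risk_proj_C_div_sq)
  show ?thesis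
    using Lim_transform_eventually[OF lim ev] unfolding val .
qed

theorem proposition2:
  fixes \<theta> :: "'a::euclidean_space"
  assumes "\<theta> \<notin> unit_ball_C"
  shows "((\<lambda>\<sigma>. misspec_risk proj_C \<theta> \<sigma> / \<sigma>\<^sup>2) \<longlongrightarrow> (real DIM('a) - 1) / (norm \<theta>)\<^sup>2) (at_right 0) \<and>
         ((\<lambda>\<sigma>. excess_risk proj_C \<theta> \<sigma> / \<sigma>\<^sup>2) \<longlongrightarrow> (real DIM('a) - 1) / norm \<theta>) (at_right 0)"
proof -
  have "norm \<theta> > 1" using assms by (auto simp: unit_ball_C_def)
  then show ?thesis using misspec_risk_proj_C_tendsto excess_risk_proj_C_tendsto by blast
qed

end
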